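(* Consider COMPLEMENT-GRUNDY. Then $\mathcal{SG}(n)/n\rightarrow 0$, as $n\rightarrow \infty$.
   Context: COMPLEMENT-GRUNDY is the impartial normal-play heap game where a move replaces a heap $n$ by the disjunctive sum of $k$ heaps of size $d$ and one heap of size $r$ (omitted if $r=0$), where $n=kd+r$, $1\le d<n$, $0\le r<d$, and $k\ge 2$; a heap of size $1$ is terminal. $\mathcal{SG}$ denotes the Sprague-Grundy value (mex rule, nim-sum for disjunctive sums). *)

theory Defs
  imports "HOL-Analysis.Analysis"
begin

definition mex :: "nat set \<Rightarrow> nat" where
  "mex A = (LEAST m. m \<notin> A)"

(* nim-sum of k copies of a heap value v *)
definition nim_copies :: "nat \<Rightarrow> nat \<Rightarrow> nat" where
  "nim_copies k v = (if even k then 0 else v)"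

(* A move n \<mapsto> k heaps of size d plus one heap of size r = n mod d (omitted if r = 0),
   with k = n div d \<ge> 2, i.e. 1 \<le> d \<le> n div 2 (this forces d < n and 0 \<le> r < d).
   The heap 1 has no moves, value 0. sg 0 = 0 plays the role of the omitted heap. *)
function sg :: "nat \<Rightarrow> nat" where
  "sg n = mex ((\<lambda>d. Bit_Operations.xor (nim_copies (n div d) (sg d)) (sg (n mod d))) ` {1..n div 2})"
  by auto
termination
proof (relation "Wellfounded.measure (\<lambda>n::nat. n)")
  fix n d :: nat assume "d \<in> {1..n div 2}"
  then have "1 \<le> d" "2 * d \<le> n" by auto
  then show "(n mod d, n) \<in> Wellfounded.measure (\<lambda>n::nat. n)"
    proof -
    have "0 < d" using \<open>1 \<le> d\<close> by simp
    then have "n mod d < d" by simp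
    then show ?thesis using \<open>2 * d \<le> n\<close> by simp
  qed
qed auto

end

theory Submission
  imports Defs
begin

(* By the mex rule, SG(n) - 1 (if SG(n) > 0) is the value of an option of n: k heaps d and one
   heap r, where n = k d + r and r < d. Equal heaps cancel in pairs, so this value is SG(r) when k
   is even, and SG(d) XOR SG(r) <= SG(d) + SG(r) when k is odd, in which case k >= 3 and hence
   n >= 3 d + r. With these estimates (SG(n) + 1)^2 <= 9 n + 1 follows by strong induction (the
   summand 1 on the right lets the omitted heap r = 0 satisfy the same bound), so SG(n) = O(sqrt n). *)

unbundle bit_operations_syntax
declare sg.simps [simp del]

lemma xor_le_add: "a XOR b \<le> a + b" for a b :: nat
proof (induction a arbitrary: b rule: less_induct)
  case (less a)
  show ?case
  proof (cases "a = 0")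
    case False
    then have "a div 2 XOR b div 2 \<le> a div 2 + b div 2"
      using less by simp
    then show ?thesis
      using xor_rec [of a b] by (auto elim!: oddE evenE)
  qed simp
qed

lemma square_add_le: "(a + b)\<^sup>2 \<le> 2 * a\<^sup>2 + 2 * b\<^sup>2" for a b :: "'a::linordered_idom"
proof -
  have "0 \<le> (a - b)\<^sup>2" by simp
  then show ?thesis by (simp add: power2_eq_square algebra_simps)
qed

lemma square_add_le_nat: "(a + b)\<^sup>2 \<le> 2 * a\<^sup>2 + 2 * b\<^sup>2" for a b :: nat
proof -
  have "int ((a + b)\<^sup>2) \<le> int (2 * a\<^sup>2 + 2 * b\<^sup>2)"
    using square_add_le [of "int a" "int b"] by simp
  then show ?thesis by (simp only: of_nat_le_iff)
qed

lemma mem_if_less_mex: "m < mex A \<Longrightarrow> m \<in> A"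
  unfolding mex_def using not_less_Least by blast

lemma complement_option_value_bound:
  fixes a b d n :: nat
  assumes "0 < d" "2 * d \<le> n"
    and a: "(a + 1)\<^sup>2 \<le> 9 * d + 1" and b: "(b + 1)\<^sup>2 \<le> 9 * (n mod d) + 1"
  shows "((nim_copies (n div d) a XOR b) + 2)\<^sup>2 \<le> 9 * n + 1"
proof -
  define k r x where "k = n div d" and "r = n mod d" and "x = nim_copies k a"
  have n_eq: "n = k * d + r" and "r + 1 \<le> d"
    using \<open>0 < d\<close> by (simp_all add: k_def r_def Suc_le_eq)
  have "2 \<le> k"
    using assms(1,2) by (simp add: k_def less_eq_div_iff_mult_less_eq mult.commute)
  have x: "2 * (x + 1)\<^sup>2 + 9 * d \<le> 9 * (k * d) + 2"
  proof (cases "even k")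
    case True
    have "d \<le> k * d" using \<open>2 \<le> k\<close> by simp
    then show ?thesis using True by (simp add: x_def nim_copies_def)
  next
    case False
    then have "3 \<le> k" using \<open>2 \<le> k\<close> by presburger
    then have "3 * d \<le> k * d" by simp
    moreover have "x = a" using False by (simp add: x_def nim_copies_def)
    ultimately show ?thesis using a unfolding \<open>x = a\<close> by linarith
  qed
  have "((x XOR b) + 2)\<^sup>2 \<le> ((x + 1) + (b + 1))\<^sup>2"
    using xor_le_add [of x b] by (simp add: power_mono)
  also have "\<dots> \<le> 2 * (x + 1)\<^sup>2 + 2 * (b + 1)\<^sup>2"
    by (rule square_add_le_nat)
  also have "\<dots> \<le> 9 * n + 1"
    using x b [folded r_def] n_eq \<open>r + 1 \<le> d\<close> by linarith
  finally show ?thesis unfolding x_def k_def .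
qed

lemma sg_succ_square_le: "(sg n + 1)\<^sup>2 \<le> 9 * n + 1"
proof (induction n rule: less_induct)
  case (less n)
  show ?case
  proof (cases "sg n = 0")
    case False
    then have "sg n - 1 < sg n" by simp
    then obtain d where d: "d \<in> {1..n div 2}"
      and val: "sg n - 1 = nim_copies (n div d) (sg d) XOR sg (n mod d)"
      by (subst (asm) (2) sg.simps) (auto dest: mem_if_less_mex)
    then have "d < n" "n mod d < d" by auto
    then have "((sg n - 1) + 2)\<^sup>2 \<le> 9 * n + 1"
      unfolding val using d less.IH by (intro complement_option_value_bound) auto
    with False show ?thesis by simp
  qed simp
qed

lemma LIMSEQ_divide_zero_if_square_le_linear:
  fixes f :: "nat \<Rightarrow> real"
  assumes "\<And>n. (f n)\<^sup>2 \<le> c * real n"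
  shows "(\<lambda>n. f n / real n) \<longlonglongrightarrow> 0"
proof (rule Lim_null_comparison)
  show "\<forall>\<^sub>F n in sequentially. norm (f n / real n) \<le> sqrt (c / real n)"
  proof (rule eventually_sequentiallyI)
    fix n :: nat assume "1 \<le> n"
    then have "\<bar>f n / real n\<bar>\<^sup>2 \<le> c / real n"
      using assms [of n] by (simp add: field_simps power2_eq_square)
    then show "norm (f n / real n) \<le> sqrt (c / real n)"
      by (simp add: real_le_rsqrt)
  qed
  show "(\<lambda>n. sqrt (c / real n)) \<longlonglongrightarrow> 0"
    using tendsto_real_sqrt [OF lim_const_over_n [of c]] by simp
qed

theorem mainTheorem10:
  shows "(\<lambda>n. real (sg n) / real n) \<longlonglongrightarrow> 0"
proof (rule LIMSEQ_divide_zero_if_square_le_linear)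
  fix n
  have "(sg n)\<^sup>2 \<le> 9 * n"
    using sg_succ_square_le [of n] by (simp add: power2_eq_square)
  then show "(real (sg n))\<^sup>2 \<le> 9 * real n"
    by (metis of_nat_le_iff of_nat_mult of_nat_numeral of_nat_power)
qed

end
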